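(* Suppose Assumption A holds and the PP-BDR property holds for $\tilde S$ (with respect to the generators $\tilde G$) with order $k'$. Then $\overline{\mathrm{conv}(S)}=\widetilde{\mathrm{TH}}_{k'}(\tilde G)$.
   Context: $X=(X_1,\dots,X_n)$, $\tilde X=(X_0,X_1,\dots,X_n)$, $\|\cdot\|_2$ Euclidean norm. For $f\in\mathbb{R}[X]$ of degree $d$, its homogenization is $\tilde f(\tilde X)=X_0^df(X/X_0)\in\mathbb{R}[\tilde X]$. Fix $g_1,\dots,g_m\in\mathbb{R}[X]$ and $S=\{x\in\mathbb{R}^n:g_1(x)\ge0,\dots,g_m(x)\ge0\}$. Define $\tilde S^{o}=\{\tilde x=(x_0,x)\in\mathbb{R}^{n+1}:\tilde g_j(\tilde x)\ge0\ (j=1,\dots,m),\ x_0>0\}$, $\tilde S^{c}$ the same set with $x_0\ge0$ in place of $x_0>0$, and $\tilde S=\tilde S^c\cap\{\|\tilde x\|_2=1\}$. $S$ is closed at $\infty$ if $\overline{\tilde S^{o}}=\tilde S^{c}$. For a finite set $H=\{h_1,\dots,h_r\}$ of polynomials, the $k$-th quadratic module is $\mathcal{Q}_k(H)=\{\sum_{j=0}^r\sigma_jh_j:h_0=1,\ \sigma_j\text{ sums of squares of polynomials},\ \deg(\sigma_jh_j)\le2k\}$. Let $\tilde G=\{\tilde g_1,\dots,\tilde g_m,X_0,\|\tilde X\|_2^2-1,1-\|\tilde X\|_2^2\}$. Let $\mathcal{P}[\tilde X]_1$ be the set of linear forms (homogeneous of degree one) in $\tilde X$ together with $0$. The modified theta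 body is $\widetilde{\mathrm{TH}}_k(\tilde G)=\{x\in\mathbb{R}^n:\tilde l(1,x)\ge0\ \forall\tilde l\in\mathcal{Q}_k(\tilde G)\cap\mathcal{P}[\tilde X]_1\}$. A closed convex cone $K$ is pointed if $K\cap(-K)=\{0\}$. Assumption A: (i) $S$ is closed at $\infty$; (ii) the convex cone $\mathrm{conv}(\overline{\tilde S^{o}})$ is closed and pointed. PP-BDR property: for a set $T=\{z:h_1(z)\ge0,\dots,h_r(z)\ge0\}$ given by generators $H=\{h_1,\dots,h_r\}$, PP-BDR holds for $T$ with order $k$ if every affine polynomial $p$ that is positive on $T$ belongs to $\mathcal{Q}_k(H)$, except possibly for a set of coefficient vectors of $p$ of Lebesgue measure zero. *)

theory Defs
  imports "HOL-Analysis.Analysis" "HOL-Library.Poly_Mapping"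
begin

type_synonym 'v mpoly = "('v \<Rightarrow>\<^sub>0 nat) \<Rightarrow>\<^sub>0 real"

definition mdeg :: "('v \<Rightarrow>\<^sub>0 nat) \<Rightarrow> nat" where
  "mdeg \<alpha> = sum (Poly_Mapping.lookup \<alpha>) (Poly_Mapping.keys \<alpha>)"

text \<open>total degree (degree of the zero polynomial is taken to be 0)\<close>
definition tdeg :: "'v mpoly \<Rightarrow> nat" where
  "tdeg p = Max (insert 0 (mdeg ` Poly_Mapping.keys p))"

definition meval :: "'v mpoly \<Rightarrow> ('v \<Rightarrow> real) \<Rightarrow> real" where
  "meval p x = (\<Sum>\<alpha>\<in>Poly_Mapping.keys p. Poly_Mapping.lookup p \<alpha> * (\<Prod>v\<in>Poly_Mapping.keys \<alpha>. x v ^ Poly_Mapping.lookup \<alpha> v))"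

definition Xvar :: "'v \<Rightarrow> 'v mpoly" where
  "Xvar v = Poly_Mapping.single (Poly_Mapping.single v 1) 1"

text \<open>lift an exponent vector in X_1..X_n to one in X_0,X_1..X_n (None = X_0)\<close>
definition lift_mon :: "('v \<Rightarrow>\<^sub>0 nat) \<Rightarrow> ('v option \<Rightarrow>\<^sub>0 nat)" where
  "lift_mon \<alpha> = (\<Sum>v\<in>Poly_Mapping.keys \<alpha>. Poly_Mapping.single (Some v) (Poly_Mapping.lookup \<alpha> v))"

text \<open>homogenization  X_0^d f(X/X_0), d = total degree of f\<close>
definition homog :: "'v mpoly \<Rightarrow> 'v option mpoly" where
  "homog f = (\<Sum>\<alpha>\<in>Poly_Mapping.keys f. Poly_Mapping.single
       (lift_mon \<alpha> + Poly_Mapping.single None (tdeg f - mdeg \<alpha>)) (Poly_Mapping.lookup f \<alpha>))"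

definition sos :: "'v mpoly \<Rightarrow> bool" where
  "sos \<sigma> \<longleftrightarrow> (\<exists>qs. \<sigma> = sum_list (map (\<lambda>q. q ^ 2) qs))"

text \<open>k-th (truncated) quadratic module of H = [h_1,...,h_r], with h_0 = 1\<close>
definition quadmod :: "'v mpoly list \<Rightarrow> nat \<Rightarrow> 'v mpoly set" where
  "quadmod H k = {p. \<exists>\<sigma>s. length \<sigma>s = length (1 # H) \<and> (\<forall>\<sigma>\<in>set \<sigma>s. sos \<sigma>) \<and>
      (\<forall>i<length (1 # H). tdeg (\<sigma>s ! i * (1 # H) ! i) \<le> 2 * k) \<and>
      p = (\<Sum>i<length (1 # H). \<sigma>s ! i * (1 # H) ! i)}"

text \<open>linear forms (homogeneous of degree one) together with 0\<close>
definition linform :: "'v mpoly \<Rightarrow> bool" where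
  "linform l \<longleftrightarrow> (\<forall>\<alpha>\<in>Poly_Mapping.keys l. mdeg \<alpha> = 1)"

definition normsq :: "('v::finite) mpoly" where
  "normsq = (\<Sum>v\<in>UNIV. Xvar v ^ 2)"

definition embed :: "real \<Rightarrow> real ^ ('n::finite) \<Rightarrow> real ^ ('n option)" where
  "embed x0 x = (\<chi> i. case i of None \<Rightarrow> x0 | Some j \<Rightarrow> x $ j)"

definition S_set :: "('n::finite) mpoly list \<Rightarrow> (real ^ 'n) set" where
  "S_set gs = {x. \<forall>g\<in>set gs. meval g (($) x) \<ge> 0}"

definition St_open :: "('n::finite) mpoly list \<Rightarrow> (real ^ ('n option)) set" where
  "St_open gs = {z. (\<forall>g\<in>set gs. meval (homog g) (($) z) \<ge> 0) \<and> z $ None > 0}"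

definition St_closed :: "('n::finite) mpoly list \<Rightarrow> (real ^ ('n option)) set" where
  "St_closed gs = {z. (\<forall>g\<in>set gs. meval (homog g) (($) z) \<ge> 0) \<and> z $ None \<ge> 0}"

definition St :: "('n::finite) mpoly list \<Rightarrow> (real ^ ('n option)) set" where
  "St gs = St_closed gs \<inter> {z. norm z = 1}"

definition Gt :: "('n::finite) mpoly list \<Rightarrow> 'n option mpoly list" where
  "Gt gs = map homog gs @ [Xvar None, normsq - 1, 1 - normsq]"

definition closed_at_infinity :: "('n::finite) mpoly list \<Rightarrow> bool" where
  "closed_at_infinity gs \<longleftrightarrow> closure (St_open gs) = St_closed gs"

definition pointed :: "('a::real_vector) set \<Rightarrow> bool" where
  "pointed K \<longleftrightarrow> K \<inter> uminus ` K = {0}"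

definition assumptionA :: "('n::finite) mpoly list \<Rightarrow> bool" where
  "assumptionA gs \<longleftrightarrow> closed_at_infinity gs \<and>
     closed (convex hull (closure (St_open gs))) \<and> pointed (convex hull (closure (St_open gs)))"

definition theta_mod :: "nat \<Rightarrow> ('n::finite) option mpoly list \<Rightarrow> (real ^ 'n) set" where
  "theta_mod k H = {x. \<forall>l\<in>quadmod H k. linform l \<longrightarrow> meval l (($) (embed 1 x)) \<ge> 0}"

definition affpoly :: "real \<Rightarrow> real ^ ('v::finite) \<Rightarrow> 'v mpoly" where
  "affpoly c a = Poly_Mapping.single 0 c + (\<Sum>v\<in>UNIV. Poly_Mapping.single (Poly_Mapping.single v 1) (a $ v))"

definition semialg :: "('v::finite) mpoly list \<Rightarrow> (real ^ 'v) set" where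
  "semialg H = {z. \<forall>h\<in>set H. meval h (($) z) \<ge> 0}"

definition pp_bdr :: "('v::finite) mpoly list \<Rightarrow> nat \<Rightarrow> bool" where
  "pp_bdr H k \<longleftrightarrow> (\<exists>N::(real \<times> (real ^ 'v)) set. N \<in> null_sets lebesgue \<and>
     (\<forall>c a. (c, a) \<notin> N \<longrightarrow> (\<forall>z\<in>semialg H. meval (affpoly c a) (($) z) > 0) \<longrightarrow>
        affpoly c a \<in> quadmod H k))"

end

theory Submission
  imports Defs
begin

text \<open>Dehomogenisation maps the points of $\tilde S$ with $x_0 > 0$ onto $S$, and the generators
  $\tilde G$ cut out exactly $\tilde S$. A linear form in $\mathcal Q_k(\tilde G)$ is nonnegative on
  $\tilde S$, hence at $(1,x)$ for $x \in S$; since the theta body is an intersection of half-spaces,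
  it contains $\overline{\mathrm{conv}(S)}$.

  Conversely, a point $x$ outside $\overline{\mathrm{conv}(S)}$ is strictly separated from it; the
  homogenised separating form is nonnegative on the cone $K = \mathrm{conv}(\overline{\tilde S^o})$
  and negative at $(1,x)$. As $K$ is closed and pointed, tilting the form makes it bounded below by some
  $m > 0$ on $K \cap S^n \supseteq \tilde S$ (closedness at infinity) while staying negative at $(1,x)$.
  PP-BDR certifies membership in $\mathcal Q_k(\tilde G)$ for almost every nearby affine form
  $c + a'$ with $c < 0$; dropping $c$ leaves a linear form of the module that is negative at $(1,x)$
  up to an arbitrarily small error, so $x$ is not in the theta body.\<close>

definition mon :: "('v \<Rightarrow>\<^sub>0 nat) \<Rightarrow> ('v \<Rightarrow> real) \<Rightarrow> real" where
  "mon \<alpha> z = (\<Prod>v\<in>Poly_Mapping.keys \<alpha>. z v ^ Poly_Mapping.lookup \<alpha> v)"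

lemma mon_superset: "finite B \<Longrightarrow> Poly_Mapping.keys \<alpha> \<subseteq> B \<Longrightarrow>
  mon \<alpha> z = (\<Prod>v\<in>B. z v ^ Poly_Mapping.lookup \<alpha> v)"
  unfolding mon_def
  by (rule prod.mono_neutral_left) (auto simp: in_keys_iff)

lemma mon_add: "mon (\<alpha> + \<beta>) z = mon \<alpha> z * mon \<beta> z"
proof -
  let ?B = "Poly_Mapping.keys \<alpha> \<union> Poly_Mapping.keys \<beta>"
  have "mon (\<alpha> + \<beta>) z = (\<Prod>v\<in>?B. z v ^ Poly_Mapping.lookup (\<alpha> + \<beta>) v)"
    by (rule mon_superset) (auto dest: set_mp[OF keys_add])
  also have "\<dots> = (\<Prod>v\<in>?B. z v ^ Poly_Mapping.lookup \<alpha> v) * (\<Prod>v\<in>?B. z v ^ Poly_Mapping.lookup \<beta> v)"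
    by (simp add: lookup_add power_add prod.distrib)
  also have "\<dots> = mon \<alpha> z * mon \<beta> z"
    by (simp add: mon_superset[symmetric])
  finally show ?thesis .
qed

lemma mon_zero[simp]: "mon 0 z = 1" by (simp add: mon_def)

lemma mon_sum: "finite I \<Longrightarrow> mon (\<Sum>i\<in>I. m i) z = (\<Prod>i\<in>I. mon (m i) z)"
  by (induction I rule: finite_induct) (auto simp: mon_add)

lemma mon_single: "mon (Poly_Mapping.single v k) z = z v ^ k"
  by (subst mon_superset[of "{v}"]) auto

lemma meval_superset: "finite A \<Longrightarrow> Poly_Mapping.keys p \<subseteq> A \<Longrightarrow>
  meval p z = (\<Sum>\<alpha>\<in>A. Poly_Mapping.lookup p \<alpha> * mon \<alpha> z)"
  unfolding meval_def mon_def[symmetric]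
  by (rule sum.mono_neutral_left) (auto simp: in_keys_iff)

lemma meval_add: "meval (p + q) z = meval p z + meval q z"
proof -
  let ?B = "Poly_Mapping.keys p \<union> Poly_Mapping.keys q"
  have "meval (p + q) z = (\<Sum>\<alpha>\<in>?B. Poly_Mapping.lookup (p+q) \<alpha> * mon \<alpha> z)"
    by (rule meval_superset) (auto dest: set_mp[OF keys_add])
  also have "\<dots> = (\<Sum>\<alpha>\<in>?B. Poly_Mapping.lookup p \<alpha> * mon \<alpha> z) + (\<Sum>\<alpha>\<in>?B. Poly_Mapping.lookup q \<alpha> * mon \<alpha> z)"
    by (simp add: lookup_add distrib_right sum.distrib)
  also have "\<dots> = meval p z + meval q z"
    by (simp add: meval_superset[symmetric])
  finally show ?thesis .
qed

lemma meval_zero[simp]: "meval 0 z = 0" by (simp add: meval_def)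

lemma meval_uminus: "meval (- p) z = - meval p z"
  by (simp add: meval_def sum_negf)

lemma meval_diff: "meval (p - q) z = meval p z - meval q z"
  using meval_add[of p "-q" z] by (simp add: meval_uminus)

lemma meval_sum: "finite I \<Longrightarrow> meval (\<Sum>i\<in>I. m i) z = (\<Sum>i\<in>I. meval (m i) z)"
  by (induction I rule: finite_induct) (auto simp: meval_add)

lemma meval_single: "meval (Poly_Mapping.single \<alpha> c) z = c * mon \<alpha> z"
  by (subst meval_superset[of "{\<alpha>}"]) auto

lemma poly_mapping_single_expansion: "p = (\<Sum>\<alpha>\<in>Poly_Mapping.keys p. Poly_Mapping.single \<alpha> (Poly_Mapping.lookup p \<alpha>))"
  by (rule poly_mapping_eqI) (auto simp: lookup_sum lookup_single when_def in_keys_iff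
      intro: sum.neutral)

lemma meval_mult: "meval (p * q) z = meval p z * meval q z"
proof -
  have "p * q = (\<Sum>\<alpha>\<in>Poly_Mapping.keys p. Poly_Mapping.single \<alpha> (Poly_Mapping.lookup p \<alpha>)) *
     (\<Sum>\<beta>\<in>Poly_Mapping.keys q. Poly_Mapping.single \<beta> (Poly_Mapping.lookup q \<beta>))"
    by (subst poly_mapping_single_expansion[of p], subst poly_mapping_single_expansion[of q]) (rule refl)
  also have "\<dots> = (\<Sum>\<alpha>\<in>Poly_Mapping.keys p. \<Sum>\<beta>\<in>Poly_Mapping.keys q.
      Poly_Mapping.single (\<alpha>+\<beta>) (Poly_Mapping.lookup p \<alpha> * Poly_Mapping.lookup q \<beta>))"
    by (simp add: sum_distrib_left sum_distrib_right mult_single) (rule sum.swap)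
  finally have "meval (p*q) z = (\<Sum>\<alpha>\<in>Poly_Mapping.keys p. \<Sum>\<beta>\<in>Poly_Mapping.keys q.
      Poly_Mapping.lookup p \<alpha> * mon \<alpha> z * (Poly_Mapping.lookup q \<beta> * mon \<beta> z))"
    by (simp add: meval_sum meval_single mon_add algebra_simps)
  also have "\<dots> = meval p z * meval q z"
    by (simp add: meval_def mon_def sum_product)
  finally show ?thesis .
qed

lemma meval_one[simp]: "meval 1 z = 1"
  by (simp add: meval_def)

lemma meval_sos: "sos \<sigma> \<Longrightarrow> meval \<sigma> z \<ge> 0"
proof -
  assume "sos \<sigma>"
  then obtain qs where "\<sigma> = sum_list (map (\<lambda>q. q ^ 2) qs)" by (auto simp: sos_def)
  moreover have "meval (sum_list (map (\<lambda>q. q ^ 2) qs)) z \<ge> 0"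
    by (induction qs) (auto simp: meval_add meval_mult power2_eq_square)
  ultimately show ?thesis by simp
qed

lemma meval_Xvar: "meval (Xvar v) z = z v"
  by (simp add: Xvar_def meval_single mon_single)

lemma meval_power: "meval (p ^ n) z = meval p z ^ n"
  by (induction n) (auto simp: meval_mult)

lemma mdeg_le_tdeg: "\<alpha> \<in> Poly_Mapping.keys f \<Longrightarrow> mdeg \<alpha> \<le> tdeg f"
  unfolding tdeg_def by (rule Max_ge) auto

lemma mon_lift: assumes "\<forall>v. w (Some v) = t * y v"
  shows "mon (lift_mon \<alpha>) w = t ^ mdeg \<alpha> * mon \<alpha> y"
proof -
  have "mon (lift_mon \<alpha>) w = (\<Prod>v\<in>Poly_Mapping.keys \<alpha>. (t * y v) ^ Poly_Mapping.lookup \<alpha> v)"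
    unfolding lift_mon_def by (simp add: mon_sum mon_single assms)
  also have "\<dots> = t ^ mdeg \<alpha> * mon \<alpha> y"
    by (simp add: power_mult_distrib prod.distrib mdeg_def mon_def power_sum)
  finally show ?thesis .
qed

lemma meval_homog: assumes "w None = t" "\<forall>v. w (Some v) = t * y v"
  shows "meval (homog f) w = t ^ tdeg f * meval f y"
proof -
  have "meval (homog f) w = (\<Sum>\<alpha>\<in>Poly_Mapping.keys f. Poly_Mapping.lookup f \<alpha> *
      (t ^ mdeg \<alpha> * mon \<alpha> y * t ^ (tdeg f - mdeg \<alpha>)))"
    unfolding homog_def by (simp add: meval_sum meval_single mon_add mon_single mon_lift[OF assms(2)] assms(1))
  also have "\<dots> = (\<Sum>\<alpha>\<in>Poly_Mapping.keys f. t ^ tdeg f * (Poly_Mapping.lookup f \<alpha> * mon \<alpha> y))"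
  proof (rule sum.cong[OF refl])
    fix \<alpha> assume "\<alpha> \<in> Poly_Mapping.keys f"
    then have "mdeg \<alpha> \<le> tdeg f" by (rule mdeg_le_tdeg)
    then have "t ^ mdeg \<alpha> * t ^ (tdeg f - mdeg \<alpha>) = t ^ tdeg f"
      by (simp add: power_add[symmetric])
    then show "Poly_Mapping.lookup f \<alpha> * (t ^ mdeg \<alpha> * mon \<alpha> y * t ^ (tdeg f - mdeg \<alpha>)) =
      t ^ tdeg f * (Poly_Mapping.lookup f \<alpha> * mon \<alpha> y)"
      by (metis mult.assoc mult.commute)
  qed
  also have "\<dots> = t ^ tdeg f * meval f y"
    by (simp add: meval_def mon_def sum_distrib_left)
  finally show ?thesis .
qed

lemma meval_affpoly: "meval (affpoly c a) (($) z) = c + a \<bullet> z"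
  by (simp add: affpoly_def meval_add meval_sum meval_single mon_single inner_vec_def)

lemma mdeg_eq_1_single: assumes "mdeg \<alpha> = 1" shows "\<exists>v. \<alpha> = Poly_Mapping.single v 1"
proof -
  let ?K = "Poly_Mapping.keys \<alpha>"
  have "?K \<noteq> {}" using assms by (auto simp: mdeg_def)
  then obtain v where v: "v \<in> ?K" by blast
  have fin: "finite ?K" by simp
  have "mdeg \<alpha> = Poly_Mapping.lookup \<alpha> v + sum (Poly_Mapping.lookup \<alpha>) (?K - {v})"
    unfolding mdeg_def using v fin by (simp add: sum.remove)
  moreover have "Poly_Mapping.lookup \<alpha> v \<ge> 1" using v by (simp add: in_keys_iff)
  ultimately have a1: "Poly_Mapping.lookup \<alpha> v = 1" and s0: "sum (Poly_Mapping.lookup \<alpha>) (?K - {v}) = 0"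
    using assms by auto
  have "\<forall>u\<in>?K - {v}. Poly_Mapping.lookup \<alpha> u = 0" using s0 fin by simp
  then have "?K \<subseteq> {v}" by (auto simp: in_keys_iff)
  then have "\<forall>u. u \<noteq> v \<longrightarrow> Poly_Mapping.lookup \<alpha> u = 0" by (auto simp: in_keys_iff)
  then have "\<alpha> = Poly_Mapping.single v 1"
    by (intro poly_mapping_eqI) (auto simp: lookup_single when_def a1)
  then show ?thesis by blast
qed

definition lin_coeffs :: "('v::finite) mpoly \<Rightarrow> real^'v" where
  "lin_coeffs l = (\<chi> v. Poly_Mapping.lookup l (Poly_Mapping.single v 1))"

lemma meval_linform: assumes "linform l" shows "meval l (($) z) = lin_coeffs l \<bullet> z"
proof -
  have sub: "Poly_Mapping.keys l \<subseteq> range (\<lambda>v. Poly_Mapping.single v (1::nat))"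
    using assms mdeg_eq_1_single by (fastforce simp: linform_def)
  have inj: "inj (\<lambda>v. Poly_Mapping.single v (1::nat))"
    by (rule injI) (metis lookup_single_eq lookup_single_not_eq one_neq_zero)
  have "meval l (($) z) = (\<Sum>\<alpha>\<in>range (\<lambda>v. Poly_Mapping.single v (1::nat)). Poly_Mapping.lookup l \<alpha> * mon \<alpha> (($) z))"
    by (rule meval_superset[OF _ sub]) simp
  also have "\<dots> = lin_coeffs l \<bullet> z"
    by (subst sum.reindex[OF inj]) (simp add: mon_single lin_coeffs_def inner_vec_def)
  finally show ?thesis .
qed

lemma meval_normsq: "meval normsq (($) (z::real^('v::finite))) = norm z ^ 2"
proof -
  have "meval normsq (($) z) = (\<Sum>v\<in>UNIV. z $ v ^ 2)"
    by (simp add: normsq_def meval_sum meval_power meval_Xvar)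
  also have "\<dots> = z \<bullet> z" by (simp add: inner_vec_def power2_eq_square)
  also have "\<dots> = norm z ^ 2" by (simp add: power2_norm_eq_inner)
  finally show ?thesis .
qed

lemma quadmod_nonneg_on_semialg:
  assumes "p \<in> quadmod H k" "z \<in> semialg H"
  shows "meval p (($) z) \<ge> 0"
proof -
  obtain \<sigma>s where len: "length \<sigma>s = length (1 # H)" and sos: "\<forall>\<sigma>\<in>set \<sigma>s. sos \<sigma>"
    and p: "p = (\<Sum>i<length (1 # H). \<sigma>s ! i * (1 # H) ! i)"
    using assms(1) unfolding quadmod_def by blast
  have "\<forall>h\<in>set (1 # H). meval h (($) z) \<ge> 0" using assms(2) by (auto simp: semialg_def)
  then have "\<And>i. i < length (1 # H) \<Longrightarrow> meval (\<sigma>s ! i * (1 # H) ! i) (($) z) \<ge> 0"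
    using sos len unfolding meval_mult by (metis mult_nonneg_nonneg meval_sos nth_mem)
  then show ?thesis unfolding p meval_sum[OF finite_lessThan] by (intro sum_nonneg) auto
qed

lemma tdeg_le_iff: "tdeg q \<le> n \<longleftrightarrow> (\<forall>\<alpha>\<in>Poly_Mapping.keys q. mdeg \<alpha> \<le> n)"
  unfolding tdeg_def by (subst Max_le_iff) auto

lemma sos_add_const: assumes "sos \<sigma>" "d \<ge> 0" shows "sos (\<sigma> + Poly_Mapping.single 0 d)"
proof -
  obtain qs where qs: "\<sigma> = sum_list (map (\<lambda>q. q ^ 2) qs)" using assms(1) by (auto simp: sos_def)
  have "Poly_Mapping.single 0 d = (Poly_Mapping.single 0 (sqrt d) :: 'a mpoly) ^ 2"
    using assms(2) by (simp add: power2_eq_square mult_single)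
  then have "\<sigma> + Poly_Mapping.single 0 d = sum_list (map (\<lambda>q. q ^ 2) (qs @ [Poly_Mapping.single 0 (sqrt d)]))"
    by (simp add: qs)
  then show ?thesis unfolding sos_def by blast
qed

lemma quadmod_add_const: assumes "p \<in> quadmod H k" "d \<ge> 0"
  shows "p + Poly_Mapping.single 0 d \<in> quadmod H k"
proof -
  obtain \<sigma>s where len: "length \<sigma>s = length (1 # H)" and sos: "\<forall>\<sigma>\<in>set \<sigma>s. sos \<sigma>"
    and deg: "\<forall>i<length (1 # H). tdeg (\<sigma>s ! i * (1 # H) ! i) \<le> 2 * k"
    and p: "p = (\<Sum>i<length (1 # H). \<sigma>s ! i * (1 # H) ! i)"
    using assms(1) unfolding quadmod_def by blast
  define \<tau>s where "\<tau>s = \<sigma>s[0 := \<sigma>s ! 0 + Poly_Mapping.single 0 d]"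
  have len': "length \<tau>s = length (1 # H)" using len by (simp add: \<tau>s_def)
  have "sos (\<sigma>s ! 0 + Poly_Mapping.single 0 d)"
    using sos len assms(2) by (intro sos_add_const) auto
  then have sos': "\<forall>\<sigma>\<in>set \<tau>s. sos \<sigma>"
    using sos set_update_subset_insert[of \<sigma>s 0] unfolding \<tau>s_def by blast
  have t0: "\<tau>s ! 0 = \<sigma>s ! 0 + Poly_Mapping.single 0 d" using len by (simp add: \<tau>s_def)
  have tS: "\<tau>s ! Suc i = \<sigma>s ! Suc i" for i by (simp add: \<tau>s_def)
  have "tdeg (\<sigma>s ! 0) \<le> 2 * k" using deg[rule_format, of 0] by simp
  then have "tdeg (\<tau>s ! 0) \<le> 2 * k"
    unfolding t0 tdeg_le_iff using keys_add[of "\<sigma>s ! 0" "Poly_Mapping.single 0 d"]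
    by (auto simp: mdeg_def split: if_splits)
  then have deg': "\<forall>i<length (1 # H). tdeg (\<tau>s ! i * (1 # H) ! i) \<le> 2 * k"
    using deg by (auto simp: tS nth_Cons split: nat.splits)
  have split_0: "(\<Sum>i<length (1 # H). f i * (1 # H) ! i) = f 0 + (\<Sum>i<length H. f (Suc i) * H ! i)"
    for f :: "nat \<Rightarrow> _ mpoly"
    by (simp only: length_Cons sum.lessThan_Suc_shift nth_Cons_0 nth_Cons_Suc mult_1_right)
  have "p + Poly_Mapping.single 0 d = (\<Sum>i<length (1 # H). \<tau>s ! i * (1 # H) ! i)"
    unfolding p split_0 t0 tS by (simp only: add_ac)
  then show ?thesis unfolding quadmod_def using len' sos' deg' by blast
qed

lemma linform_affpoly_0: "linform (affpoly 0 a)"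
proof -
  have "Poly_Mapping.keys (affpoly 0 a) \<subseteq> (\<Union>v. Poly_Mapping.keys (Poly_Mapping.single (Poly_Mapping.single v (1::nat)) (a $ v)))"
    unfolding affpoly_def single_zero add_0 by (rule keys_sum)
  also have "\<dots> \<subseteq> range (\<lambda>v. Poly_Mapping.single v 1)" by auto
  finally show ?thesis unfolding linform_def by (fastforce simp: mdeg_def)
qed

lemma affpoly_add_const: "affpoly c a + Poly_Mapping.single 0 d = affpoly (c + d) a"
  by (simp add: affpoly_def single_add add_ac)

text \<open>Adding the constant $-c \ge 0$, a square, to $\sigma_0$ cancels the constant term.\<close>
lemma theta_mod_affpoly_linear_part:
  assumes "affpoly c a \<in> quadmod H k" "c \<le> 0" "x \<in> theta_mod k H"
  shows "0 \<le> a \<bullet> embed 1 x"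
proof -
  have "affpoly 0 a \<in> quadmod H k"
    using quadmod_add_const[OF assms(1), of "- c"] assms(2) by (simp add: affpoly_add_const)
  then have "0 \<le> meval (affpoly 0 a) (($) (embed 1 x))"
    using assms(3) linform_affpoly_0 unfolding theta_mod_def by blast
  then show ?thesis by (simp add: meval_affpoly)
qed

lemma embed_None[simp]: "embed t x $ None = t" and embed_Some[simp]: "embed t x $ Some j = x $ j"
  by (simp_all add: embed_def)

lemma sum_UNIV_option:
  fixes f :: "('n::finite) option \<Rightarrow> 'a::comm_monoid_add"
  shows "(\<Sum>v\<in>UNIV. f v) = f None + (\<Sum>j\<in>UNIV. f (Some j))"
  by (simp add: UNIV_option_conv sum.reindex)

lemma inner_embed: "(a::real^('n::finite) option) \<bullet> embed t x = a $ None * t + (\<chi> j. a $ Some j) \<bullet> x"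
  by (simp add: inner_vec_def sum_UNIV_option)

lemma theta_mod_closed: "closed (theta_mod k (H :: ('n::finite) option mpoly list))"
  and theta_mod_convex: "convex (theta_mod k H)"
proof -
  have "theta_mod k H = (\<Inter>l\<in>{l\<in>quadmod H k. linform l}.
     {x. (\<chi> j. lin_coeffs l $ Some j) \<bullet> x \<ge> - (lin_coeffs l $ None)})"
    unfolding theta_mod_def by (auto simp: meval_linform inner_embed add.commute[of "lin_coeffs _ $ None"]
      simp flip: diff_le_eq)
  then show "closed (theta_mod k H)" "convex (theta_mod k H)"
    by (simp_all add: closed_INT convex_INT closed_halfspace_ge convex_halfspace_ge)
qed

definition dehomog :: "real^('n::finite) option \<Rightarrow> real^'n" where
  "dehomog z = (\<chi> j. z $ Some j / z $ None)"

lemma dehomog_scaleR: "s \<noteq> 0 \<Longrightarrow> dehomog (s *\<^sub>R z) = dehomog z"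
  by (simp add: dehomog_def)

lemma scaleR_embed_dehomog: "z $ None \<noteq> 0 \<Longrightarrow> z $ None *\<^sub>R embed 1 (dehomog z) = z"
  unfolding vec_eq_iff by (auto simp: dehomog_def embed_def split: option.split)

lemma St_open_iff_dehomog: assumes "z $ None > 0"
  shows "z \<in> St_open gs \<longleftrightarrow> dehomog z \<in> S_set gs"
proof -
  have "meval (homog g) (($) z) = z $ None ^ tdeg g * meval g (($) (dehomog z))" for g
    using assms by (intro meval_homog) (auto simp: dehomog_def)
  moreover have "\<not> z $ None ^ n \<le> 0" for n using assms by (simp add: not_le)
  ultimately show ?thesis using assms by (simp add: St_open_def S_set_def zero_le_mult_iff)
qed

lemma St_open_scaleR: assumes "z \<in> St_open gs" "s > 0" shows "s *\<^sub>R z \<in> St_open gs"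
proof -
  have "z $ None > 0" using assms(1) by (simp add: St_open_def)
  then show ?thesis
    using assms St_open_iff_dehomog[of z] St_open_iff_dehomog[of "s *\<^sub>R z"] dehomog_scaleR[of s z]
    by simp
qed

lemma semialg_Gt: "semialg (Gt gs) = St gs"
proof -
  have "norm z ^ 2 = 1 \<longleftrightarrow> norm z = 1" for z :: "real^'a option"
    by (simp add: abs_square_eq_1)
  then show ?thesis
    by (auto simp: semialg_def Gt_def St_def St_closed_def meval_diff meval_normsq meval_Xvar)
qed

text \<open>Scaling (1,x) onto the unit sphere gives a point of the homogenised set.\<close>
lemma S_set_subset_theta_mod: "S_set gs \<subseteq> theta_mod k (Gt gs)"
proof
  fix x assume x: "x \<in> S_set gs"
  define e where "e = embed 1 x"
  have "e \<noteq> 0" unfolding e_def by (metis embed_None zero_index zero_neq_one)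
  then have e: "norm e > 0" by simp
  define w where "w = (1 / norm e) *\<^sub>R e"
  have "w $ None > 0" "dehomog w = x"
    using e by (simp_all add: w_def e_def dehomog_scaleR dehomog_def vec_eq_iff)
  then have "w \<in> St_open gs" using x St_open_iff_dehomog by blast
  moreover have "norm w = 1" using e by (simp add: w_def)
  ultimately have w: "w \<in> semialg (Gt gs)"
    by (simp add: semialg_Gt St_def St_open_def St_closed_def)
  show "x \<in> theta_mod k (Gt gs)" unfolding theta_mod_def
  proof (intro CollectI ballI impI)
    fix l assume l: "l \<in> quadmod (Gt gs) k" "linform l"
    have "0 \<le> lin_coeffs l \<bullet> w"
      using quadmod_nonneg_on_semialg[OF l(1) w] meval_linform[OF l(2)] by simp
    then have "0 \<le> lin_coeffs l \<bullet> e" using e by (simp add: w_def zero_le_divide_iff)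
    then show "meval l (($) (embed 1 x)) \<ge> 0" by (simp add: meval_linform[OF l(2)] e_def)
  qed
qed

lemma homogenized_separation:
  fixes gs :: "('n::finite) mpoly list"
  assumes "x \<notin> closure (convex hull S_set gs)"
  obtains L where "L \<bullet> embed 1 x < 0" "\<forall>z\<in>convex hull closure (St_open gs). 0 \<le> L \<bullet> z"
proof -
  obtain a b where ax: "a \<bullet> x < b" and aS: "\<forall>y\<in>closure (convex hull S_set gs). b < a \<bullet> y"
    using separating_hyperplane_closed_point[OF _ _ assms] by auto
  define L :: "real^'n option" where "L = (\<chi> i. case i of None \<Rightarrow> - b | Some j \<Rightarrow> a $ j)"
  have La: "(\<chi> j. L $ Some j) = a" by (simp add: L_def vec_eq_iff)
  have L_embed: "L \<bullet> embed t y = a \<bullet> y - b * t" for t y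
    by (simp add: inner_embed La) (simp add: L_def algebra_simps)
  have "0 \<le> L \<bullet> z" if z: "z \<in> St_open gs" for z
  proof -
    have z0: "z $ None > 0" using z by (simp add: St_open_def)
    then have "dehomog z \<in> closure (convex hull S_set gs)"
      using z St_open_iff_dehomog by (blast intro: hull_inc closure_subset[THEN subsetD])
    then have "0 \<le> z $ None * (a \<bullet> dehomog z - b)" using aS z0 by (simp add: less_imp_le)
    also have "\<dots> = L \<bullet> (z $ None *\<^sub>R embed 1 (dehomog z))" by (simp add: L_embed)
    also have "\<dots> = L \<bullet> z" using z0 by (simp add: scaleR_embed_dehomog)
    finally show ?thesis .
  qed
  then have "closure (St_open gs) \<subseteq> {z. 0 \<le> L \<bullet> z}"
    by (intro closure_minimal) (auto intro: closed_halfspace_ge)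
  then have "convex hull closure (St_open gs) \<subseteq> {z. 0 \<le> L \<bullet> z}"
    by (rule hull_minimal) (rule convex_halfspace_ge)
  moreover have "L \<bullet> embed 1 x < 0" using ax by (simp add: L_embed)
  ultimately show ?thesis using that by blast
qed

lemma scaleR_mem_convex_hull:
  assumes "w \<in> convex hull A" "\<And>z. z \<in> A \<Longrightarrow> s *\<^sub>R z \<in> A"
  shows "s *\<^sub>R w \<in> convex hull A"
proof -
  have "s *\<^sub>R w \<in> (*\<^sub>R) s ` (convex hull A)" using assms(1) by blast
  also have "\<dots> = convex hull ((*\<^sub>R) s ` A)" by (rule convex_hull_scaling[symmetric])
  also have "\<dots> \<subseteq> convex hull A" using assms(2) by (intro hull_mono) auto
  finally show ?thesis .
qed

lemma scaleR_mem_closure: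
  fixes A :: "'a::real_normed_vector set"
  assumes "w \<in> closure A" "\<And>z. z \<in> A \<Longrightarrow> s *\<^sub>R z \<in> A"
  shows "s *\<^sub>R w \<in> closure A"
proof -
  have "s *\<^sub>R w \<in> (*\<^sub>R) s ` closure A" using assms(1) by blast
  also have "\<dots> = closure ((*\<^sub>R) s ` A)" by (rule closure_scaleR)
  also have "\<dots> \<subseteq> closure A" using assms(2) by (intro closure_mono) auto
  finally show ?thesis .
qed

lemma convex_hull_closure_St_open_scaleR:
  assumes "w \<in> convex hull closure (St_open gs)" "s > 0"
  shows "s *\<^sub>R w \<in> convex hull closure (St_open gs)"
proof (rule scaleR_mem_convex_hull[OF assms(1)])
  fix z assume "z \<in> closure (St_open gs)"
  then show "s *\<^sub>R z \<in> closure (St_open gs)"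
    by (rule scaleR_mem_closure) (rule St_open_scaleR[OF _ assms(2)])
qed

lemma pointed_convex_cone_Diff_0:
  fixes K :: "'a::real_vector set"
  assumes p: "pointed K" and c: "convex K" and cone: "\<And>w s. w \<in> K \<Longrightarrow> s > 0 \<Longrightarrow> s *\<^sub>R w \<in> K"
  shows "convex (K - {0})"
  unfolding convex_def
proof (intro ballI allI impI)
  fix x y u v assume x: "x \<in> K - {0}" and y: "y \<in> K - {0}" and uv: "0 \<le> (u::real)" "0 \<le> v" "u + v = 1"
  show "u *\<^sub>R x + v *\<^sub>R y \<in> K - {0}"
  proof (cases "u = 0 \<or> v = 0")
    case True
    then show ?thesis
    proof
      assume "u = 0" then show ?thesis using y uv by simp
    next
      assume "v = 0" then show ?thesis using x uv by simp
    qed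
  next
    case False
    then have u: "u > 0" and v: "v > 0" using uv by auto
    have "u *\<^sub>R x + v *\<^sub>R y \<in> K" using x y uv by (intro convexD[OF c]) auto
    moreover have "u *\<^sub>R x + v *\<^sub>R y \<noteq> 0"
    proof
      assume "u *\<^sub>R x + v *\<^sub>R y = 0"
      then have "u *\<^sub>R x = - (v *\<^sub>R y)" by (simp add: eq_neg_iff_add_eq_0)
      moreover have "u *\<^sub>R x \<in> K" "v *\<^sub>R y \<in> K" using cone x y u v by auto
      ultimately have "u *\<^sub>R x \<in> K \<inter> uminus ` K" by blast
      then show False using p u x unfolding pointed_def by auto
    qed
    ultimately show ?thesis by simp
  qed
qed

text \<open>Pointedness keeps $0$ out of the convex hull of the compact set $K \cap S^n$.\<close>
lemma pointed_cone_sphere_separated: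
  fixes K :: "'a::euclidean_space set"
  assumes "closed K" "convex K" "pointed K" "\<And>w s. w \<in> K \<Longrightarrow> s > 0 \<Longrightarrow> s *\<^sub>R w \<in> K"
  obtains M b where "0 < b" "\<forall>u\<in>K \<inter> sphere 0 1. b < M \<bullet> u"
proof -
  have "convex hull (K \<inter> sphere 0 1) \<subseteq> K - {0}"
    using pointed_convex_cone_Diff_0[OF assms(3,2,4)] by (intro hull_minimal) auto
  moreover have "closed (convex hull (K \<inter> sphere 0 1))"
    by (intro compact_imp_closed compact_convex_hull closed_Int_compact assms(1) compact_sphere)
  ultimately obtain M b where "0 < b" and M: "\<forall>u\<in>convex hull (K \<inter> sphere 0 1). b < M \<bullet> u"
    using separating_hyperplane_closed_0[of "convex hull (K \<inter> sphere 0 1)"] by auto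
  moreover have "b < M \<bullet> u" if "u \<in> K \<inter> sphere 0 1" for u using M hull_inc[OF that] by blast
  ultimately show ?thesis using that by blast
qed

text \<open>Tilting $L$ slightly towards $M$ keeps it negative at $e$.\<close>
lemma tilt_to_strictly_positive:
  fixes L M e :: "'a::real_inner"
  assumes "\<forall>u\<in>D. 0 \<le> L \<bullet> u" "\<forall>u\<in>D. b < M \<bullet> u" "0 < b" "L \<bullet> e < 0"
  obtains a m where "0 < m" "\<forall>u\<in>D. m \<le> a \<bullet> u" "a \<bullet> e < 0"
proof -
  define \<epsilon> where "\<epsilon> = - (L \<bullet> e) / (2 * (\<bar>M \<bullet> e\<bar> + 1))"
  have den: "0 < 2 * (\<bar>M \<bullet> e\<bar> + 1)" by (smt (verit) abs_ge_zero)
  have \<epsilon>: "\<epsilon> > 0" unfolding \<epsilon>_def using assms(4) den by (intro divide_pos_pos) auto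
  have "\<epsilon> * (\<bar>M \<bullet> e\<bar> + 1) = - (L \<bullet> e) / 2"
    unfolding \<epsilon>_def using den by (simp add: field_simps)
  moreover have "\<epsilon> * (M \<bullet> e) \<le> \<epsilon> * \<bar>M \<bullet> e\<bar>" using \<epsilon> by (intro mult_left_mono) auto
  ultimately have "\<epsilon> * (M \<bullet> e) < - (L \<bullet> e)" using \<epsilon> assms(4) unfolding distrib_left mult_1_right by linarith
  then have "(L + \<epsilon> *\<^sub>R M) \<bullet> e < 0" by (simp add: inner_add_left)
  moreover have "\<epsilon> * b \<le> (L + \<epsilon> *\<^sub>R M) \<bullet> u" if "u \<in> D" for u
  proof -
    have "\<epsilon> * b \<le> \<epsilon> * (M \<bullet> u)" using assms(2) that \<epsilon> by (intro mult_left_mono) auto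
    moreover have "0 \<le> L \<bullet> u" using assms(1) that by blast
    ultimately show ?thesis unfolding inner_add_left inner_scaleR_left by linarith
  qed
  ultimately show ?thesis using that[of "\<epsilon> * b"] \<epsilon> assms(3) by auto
qed

lemma null_set_avoidable:
  fixes p :: "'a::euclidean_space"
  assumes "N \<in> null_sets lebesgue" "0 < r"
  obtains q where "q \<in> ball p r" "q \<notin> N"
proof -
  have "\<not> ball p r \<subseteq> N"
    using assms open_not_negligible[OF open_ball, of p r] negligible_subset
    by (auto simp: negligible_iff_null_sets)
  then show ?thesis using that by blast
qed

text \<open>The exceptional set of PP-BDR is null, so near $(-\delta/2, a)$ there is a certified
  affine form; letting $\delta \to 0$ transfers the certificate to $a$ itself.\<close>
lemma pp_bdr_positive_form_nonneg_on_theta: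
  fixes H :: "('n::finite) option mpoly list"
  assumes bdr: "pp_bdr H k" and bounded: "\<forall>z\<in>semialg H. norm z \<le> 1"
    and pos: "\<forall>z\<in>semialg H. m \<le> a \<bullet> z" and "0 < m" and x: "x \<in> theta_mod k H"
  shows "0 \<le> a \<bullet> embed 1 x"
proof (rule ccontr)
  define e where "e = embed 1 x"
  assume "\<not> 0 \<le> a \<bullet> embed 1 x"
  then have ae: "a \<bullet> e < 0" by (simp add: e_def)
  obtain N :: "(real \<times> (real^'n option)) set" where N: "N \<in> null_sets lebesgue"
    and cert: "\<And>c a'. (c, a') \<notin> N \<Longrightarrow> \<forall>z\<in>semialg H. 0 < meval (affpoly c a') (($) z) \<Longrightarrow>
        affpoly c a' \<in> quadmod H k"
    using bdr unfolding pp_bdr_def by blast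
  define \<delta> where "\<delta> = min (m / 2) (- (a \<bullet> e) / (norm e + 1))"
  have ne: "0 < norm e + 1" by (rule add_nonneg_pos[OF norm_ge_zero zero_less_one])
  have \<delta>: "0 < \<delta>" using ae ne \<open>0 < m\<close> by (simp add: \<delta>_def divide_neg_pos)
  have \<delta>m: "\<delta> \<le> m / 2" unfolding \<delta>_def by (rule min.cobounded1)
  have "\<delta> \<le> - (a \<bullet> e) / (norm e + 1)" unfolding \<delta>_def by (rule min.cobounded2)
  then have "\<delta> * (norm e + 1) \<le> - (a \<bullet> e)" by (rule pos_le_divide_eq[OF ne, THEN iffD1])
  then have \<delta>e: "\<delta> * norm e < - (a \<bullet> e)" using \<delta> by (simp add: distrib_left)
  have "0 < \<delta> / 2" using \<delta> by simp
  then obtain q where "q \<in> ball (- \<delta> / 2, a) (\<delta> / 2)" "q \<notin> N"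
    by (rule null_set_avoidable[OF N])
  moreover obtain c a' where "q = (c, a')" by (cases q)
  ultimately have q: "(c, a') \<in> ball (- \<delta> / 2, a) (\<delta> / 2)" "(c, a') \<notin> N" by auto
  then have "norm (- \<delta> / 2 - c, a - a') < \<delta> / 2" by (simp add: dist_norm)
  then have "norm (- \<delta> / 2 - c) < \<delta> / 2" and a': "norm (a - a') < \<delta> / 2"
    using norm_fst_le[of "- \<delta> / 2 - c" "a - a'"] norm_snd_le[of "a - a'" "- \<delta> / 2 - c"] by linarith+
  then have c: "- \<delta> < c" "c < 0" unfolding real_norm_def abs_less_iff by linarith+
  have close: "a \<bullet> z - \<delta> / 2 * norm z \<le> a' \<bullet> z \<and> a' \<bullet> z \<le> a \<bullet> z + \<delta> / 2 * norm z" for z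
  proof -
    have "\<bar>(a - a') \<bullet> z\<bar> \<le> \<delta> / 2 * norm z"
      using Cauchy_Schwarz_ineq2[of "a - a'" z] a' mult_right_mono[of "norm (a - a')" "\<delta> / 2" "norm z"]
      by auto
    then have "a \<bullet> z - a' \<bullet> z \<le> \<delta> / 2 * norm z" "a' \<bullet> z - a \<bullet> z \<le> \<delta> / 2 * norm z"
      unfolding inner_diff_left abs_le_iff by auto
    then show ?thesis by linarith
  qed
  have "\<forall>z\<in>semialg H. 0 < meval (affpoly c a') (($) z)"
  proof
    fix z assume z: "z \<in> semialg H"
    have "\<delta> / 2 * norm z \<le> \<delta> / 2" using bounded z \<delta> by (intro mult_left_le) auto
    moreover have "m \<le> a \<bullet> z" using pos z by blast
    ultimately show "0 < meval (affpoly c a') (($) z)"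
      using close[of z] c \<delta>m \<open>0 < m\<close> unfolding meval_affpoly by linarith
  qed
  then have "0 \<le> a' \<bullet> e"
    using theta_mod_affpoly_linear_part[OF cert[OF q(2)] _ x] c by (simp add: e_def)
  then show False using close[of e] \<delta>e by linarith
qed

theorem mainTheorem7:
  fixes gs :: "('n::finite) mpoly list" and k' :: nat
  assumes "assumptionA gs"
    and "pp_bdr (Gt gs) k'"
  shows "closure (convex hull (S_set gs)) = theta_mod k' (Gt gs)"
proof
  show "closure (convex hull (S_set gs)) \<subseteq> theta_mod k' (Gt gs)"
    using S_set_subset_theta_mod theta_mod_closed theta_mod_convex
    by (metis closure_minimal hull_minimal)
next
  define K where "K = convex hull closure (St_open gs)"
  have "closed K" "pointed K" and St_K: "St gs \<subseteq> K \<inter> sphere 0 1"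
    using assms(1) hull_subset[of "closure (St_open gs)"]
    by (auto simp: assumptionA_def closed_at_infinity_def K_def St_def)
  moreover have "convex K" by (simp add: K_def)
  moreover have "\<And>w s. w \<in> K \<Longrightarrow> 0 < s \<Longrightarrow> s *\<^sub>R w \<in> K"
    unfolding K_def by (rule convex_hull_closure_St_open_scaleR)
  ultimately obtain M b where "0 < b" and M: "\<forall>u\<in>K \<inter> sphere 0 1. b < M \<bullet> u"
    using pointed_cone_sphere_separated[of K] by blast
  show "theta_mod k' (Gt gs) \<subseteq> closure (convex hull (S_set gs))"
  proof
    fix x assume x: "x \<in> theta_mod k' (Gt gs)"
    show "x \<in> closure (convex hull (S_set gs))"
    proof (rule ccontr)
      assume "x \<notin> closure (convex hull (S_set gs))"
      then obtain L where L_x: "L \<bullet> embed 1 x < 0" and L_K: "\<forall>z\<in>K. 0 \<le> L \<bullet> z"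
        unfolding K_def by (rule homogenized_separation)
      from L_K have "\<forall>u\<in>K \<inter> sphere 0 1. 0 \<le> L \<bullet> u" by blast
      then obtain a m where "0 < m" and a_K: "\<forall>u\<in>K \<inter> sphere 0 1. m \<le> a \<bullet> u"
          and a_x: "a \<bullet> embed 1 x < 0"
        by (rule tilt_to_strictly_positive[OF _ M \<open>0 < b\<close> L_x])
      have "\<forall>z\<in>semialg (Gt gs). norm z \<le> 1" "\<forall>z\<in>semialg (Gt gs). m \<le> a \<bullet> z"
        using St_K a_K by (auto simp: semialg_Gt St_def)
      then have "0 \<le> a \<bullet> embed 1 x"
        using pp_bdr_positive_form_nonneg_on_theta[OF assms(2) _ _ \<open>0 < m\<close> x] by blast
      with a_x show False by simp
    qed
  qed
qed

end
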